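(* Let $(\theta_1,\theta_2)$, $K_2$ be as in the normal form: on a domain in the $(x,z)$-half-plane $z>0$, $$\theta_1=\frac{dx}{z},\qquad \theta_2=\frac{dz-(\mu(x)z^2+1)dx}{z},\qquad K_2=1-\mu(x)z^2,$$ with $\mu$ a smooth function of one variable. Consider the linear system for functions $a,b,p$: $$da=(2a+p+1)\theta_1,\qquad db=-2b(K_2-1)\theta_1+(2b-p+1)\theta_2,\qquad dp=-\bigl(2b+(K_2-2)(p-1)\bigr)\theta_1+(2a+p+1)\theta_2.$$ Assume the domain is connected and its projection to the $x$-axis is an interval. Then $(a,b,p)$ is a solution if and only if $$a=-1+f(x),\qquad b=-(1+\mu(x)z^2)f(x)+z f'(x)-\tfrac12 z^2 f''(x),\qquad p=1-2f(x)+zf'(x),$$ for a function $f$ satisfying $f'''+4\mu f'+2\mu' f=0$. The general such $f$ is $$f=-c_0\phi_0^2-2c_1\phi_0\phi_1-c_2\phi_1^2,$$ with constants $c_0,c_1,c_2$, where $(\phi_0,\phi_1)$ is any pair of solutions of $\phi''+\mu\phi=0$ satisfying $\phi_0\phi_1'-\phi_1\phi_0'=1$.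
   Context: This linear system is the specialization, under $K_1\equiv1$ (Type I), of the system governing realizations of an endomorphism field with the given coframing. In that correspondence, positive solutions $a,b$ give realizations. *)

theory Defs
  imports "HOL-Analysis.Analysis"
begin

text \<open>Points of the (x,z)-half-plane are pairs (x,z). A 1-form is represented by the
linear functional it defines at each point; "d a = omega" means a has Frechet derivative omega.\<close>

definition smooth_on :: "real set \<Rightarrow> (real \<Rightarrow> real) \<Rightarrow> bool" where
  "smooth_on I g \<longleftrightarrow> (\<forall>n. \<forall>x\<in>I. ((deriv ^^ n) g) differentiable (at x))"

definition K2 :: "(real \<Rightarrow> real) \<Rightarrow> real \<Rightarrow> real \<Rightarrow> real" where
  "K2 \<mu> x z = 1 - \<mu> x * z^2"

definition theta1 :: "real \<Rightarrow> real \<Rightarrow> real \<times> real \<Rightarrow> real" where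
  "theta1 x z = (\<lambda>(dx, dz). dx / z)"

definition theta2 :: "(real \<Rightarrow> real) \<Rightarrow> real \<Rightarrow> real \<Rightarrow> real \<times> real \<Rightarrow> real" where
  "theta2 \<mu> x z = (\<lambda>(dx, dz). (dz - (\<mu> x * z^2 + 1) * dx) / z)"

definition is_solution ::
  "(real \<Rightarrow> real) \<Rightarrow> (real \<times> real) set \<Rightarrow> (real \<times> real \<Rightarrow> real) \<Rightarrow> (real \<times> real \<Rightarrow> real)
     \<Rightarrow> (real \<times> real \<Rightarrow> real) \<Rightarrow> bool" where
  "is_solution \<mu> U a b p \<longleftrightarrow>
     (\<forall>x z. (x, z) \<in> U \<longrightarrow>
        (a has_derivative
           (\<lambda>v. (2 * a (x,z) + p (x,z) + 1) * theta1 x z v)) (at (x, z)) \<and>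
        (b has_derivative
           (\<lambda>v. - 2 * b (x,z) * (K2 \<mu> x z - 1) * theta1 x z v
                 + (2 * b (x,z) - p (x,z) + 1) * theta2 \<mu> x z v)) (at (x, z)) \<and>
        (p has_derivative
           (\<lambda>v. - (2 * b (x,z) + (K2 \<mu> x z - 2) * (p (x,z) - 1)) * theta1 x z v
                 + (2 * a (x,z) + p (x,z) + 1) * theta2 \<mu> x z v)) (at (x, z)))"

end

theory Submission
  imports Defs
begin

text \<open>
  Put \<open>f = a + 1\<close>. Solving the formulas of the theorem for \<open>f, f', f''\<close> gives functions
  \<open>F, F1, F2\<close> on \<open>U\<close>, and the system for \<open>(a, b, p)\<close> says precisely that their differentials are
  \<open>F1 dx\<close>, \<open>F2 dx\<close> and \<open>(- 4 \<mu> F1 - 2 \<mu>' F) dx\<close>. So locally they depend on \<open>x\<close> alone and solve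
  \<open>f''' + 4 \<mu> f' + 2 \<mu>' f = 0\<close>. The vertical sections of \<open>U\<close> need not be connected, but \<open>U\<close> is:
  any two of its points are joined by a single solution of this linear equation on an interval,
  glued from local ones, which agree on overlaps by uniqueness (a Gronwall estimate for the energy).
  Hence \<open>F, F1, F2\<close> factor through \<open>x\<close>.

  Products of solutions of \<open>\<phi>'' + \<mu> \<phi> = 0\<close> solve the third-order equation, and
  \<open>B(f, g) = f g'' - f' g' + f'' g + 4 \<mu> f g\<close> is constant for any two of its solutions.
  Evaluating \<open>B(f, -)\<close> at \<open>\<phi>0\<^sup>2, \<phi>0 \<phi>1, \<phi>1\<^sup>2\<close> and using \<open>\<phi>0 \<phi>1' - \<phi>1 \<phi>0' = 1\<close> writes \<open>f\<close> as the
  stated quadratic form in \<open>\<phi>0, \<phi>1\<close>.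
\<close>

section \<open>The equations \<open>\<phi>'' + \<mu> \<phi> = 0\<close> and \<open>f''' + 4 \<mu> f' + 2 \<mu>' f = 0\<close>\<close>

definition ode2_sol :: "(real \<Rightarrow> real) \<Rightarrow> real set \<Rightarrow> (real \<Rightarrow> real) \<Rightarrow> (real \<Rightarrow> real) \<Rightarrow> bool" where
  "ode2_sol \<mu> J \<phi> \<phi>1 \<longleftrightarrow>
     (\<forall>x\<in>J. (\<phi> has_real_derivative \<phi>1 x) (at x) \<and> (\<phi>1 has_real_derivative - \<mu> x * \<phi> x) (at x))"

definition ode3_sol ::
  "(real \<Rightarrow> real) \<Rightarrow> real set \<Rightarrow> (real \<Rightarrow> real) \<Rightarrow> (real \<Rightarrow> real) \<Rightarrow> (real \<Rightarrow> real) \<Rightarrow> bool" where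
  "ode3_sol \<mu> J f f1 f2 \<longleftrightarrow>
     (\<forall>x\<in>J. (f has_real_derivative f1 x) (at x) \<and> (f1 has_real_derivative f2 x) (at x) \<and>
            (f2 has_real_derivative - 4 * \<mu> x * f1 x - 2 * deriv \<mu> x * f x) (at x))"

lemma smooth_on_differentiable:
  assumes "smooth_on I g" "x \<in> I"
  shows "g differentiable (at x) \<and> deriv g differentiable (at x)"
proof -
  from assms have "((deriv ^^ 0) g) differentiable (at x)" "((deriv ^^ 1) g) differentiable (at x)"
    unfolding smooth_on_def by blast+
  then show ?thesis
    by simp
qed

lemma ode3_sol_iff_ex:
  "(\<exists>f3. \<forall>x\<in>J. (f has_real_derivative f1 x) (at x) \<and> (f1 has_real_derivative f2 x) (at x) \<and>
                (f2 has_real_derivative f3 x) (at x) \<and> f3 x + 4 * \<mu> x * f1 x + 2 * deriv \<mu> x * f x = 0)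
   \<longleftrightarrow> ode3_sol \<mu> J f f1 f2"
proof -
  have "f3 x + 4 * \<mu> x * f1 x + 2 * deriv \<mu> x * f x = 0 \<longleftrightarrow> f3 x = - 4 * \<mu> x * f1 x - 2 * deriv \<mu> x * f x"
    for f3 :: "real \<Rightarrow> real" and x by linarith
  then show ?thesis
    unfolding ode3_sol_def by auto
qed

section \<open>Uniqueness and gluing of solutions\<close>

lemma gronwall_exp_monotone:
  fixes E E' :: "real \<Rightarrow> real"
  assumes "a \<le> b"
    and "\<And>t. t \<in> {a..b} \<Longrightarrow> (E has_real_derivative E' t) (at t) \<and> \<bar>E' t\<bar> \<le> C * E t"
  shows "E b * exp (- C * b) \<le> E a * exp (- C * a)" and "E a * exp (C * a) \<le> E b * exp (C * b)"
proof -
  have weighted: "((\<lambda>t. E t * exp (c * t)) has_real_derivative (E' t + c * E t) * exp (c * t)) (at t)"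
    if "t \<in> {a..b}" for c t
    using assms(2)[OF that] by (auto intro!: derivative_eq_intros simp: algebra_simps)
  show "E b * exp (- C * b) \<le> E a * exp (- C * a)"
  proof (rule DERIV_nonpos_imp_nonincreasing[OF \<open>a \<le> b\<close>])
    fix t assume "a \<le> t" "t \<le> b"
    with assms(2)[of t] have "E' t + - C * E t \<le> 0" by (auto simp: abs_le_iff)
    with weighted[of t "- C"] \<open>a \<le> t\<close> \<open>t \<le> b\<close>
    show "\<exists>y. ((\<lambda>t. E t * exp (- C * t)) has_real_derivative y) (at t) \<and> y \<le> 0"
      by (intro exI conjI) (auto intro: mult_nonpos_nonneg)
  qed
  show "E a * exp (C * a) \<le> E b * exp (C * b)"
  proof (rule DERIV_nonneg_imp_nondecreasing[OF \<open>a \<le> b\<close>])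
    fix t assume "a \<le> t" "t \<le> b"
    with assms(2)[of t] have "0 \<le> E' t + C * E t" by (auto simp: abs_le_iff)
    with weighted[of t C] \<open>a \<le> t\<close> \<open>t \<le> b\<close>
    show "\<exists>y. ((\<lambda>t. E t * exp (C * t)) has_real_derivative y) (at t) \<and> 0 \<le> y"
      by auto
  qed
qed

lemma gronwall_zero:
  fixes E E' :: "real \<Rightarrow> real"
  assumes deriv: "\<And>t. t \<in> closed_segment x0 x1 \<Longrightarrow> (E has_real_derivative E' t) (at t) \<and> \<bar>E' t\<bar> \<le> C * E t"
    and "E x0 = 0"
  shows "E x1 = 0"
proof (cases "x0 \<le> x1")
  case True
  then have "closed_segment x0 x1 = {x0..x1}" by (simp add: closed_segment_eq_real_ivl)
  from gronwall_exp_monotone[OF True deriv[unfolded this]] \<open>E x0 = 0\<close>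
  have "E x1 * exp (- C * x1) \<le> 0" "0 \<le> E x1 * exp (C * x1)" by simp_all
  then show ?thesis by (simp add: mult_le_0_iff zero_le_mult_iff)
next
  case False
  then have "closed_segment x0 x1 = {x1..x0}" by (simp add: closed_segment_eq_real_ivl)
  from gronwall_exp_monotone[of x1 x0, OF _ deriv[unfolded this]] False \<open>E x0 = 0\<close>
  have "0 \<le> E x1 * exp (- C * x1)" "E x1 * exp (C * x1) \<le> 0" by simp_all
  then show ?thesis by (simp add: mult_le_0_iff zero_le_mult_iff)
qed

lemma abs_two_mult_le_sum_squares: "\<bar>2 * x * y\<bar> \<le> x\<^sup>2 + (y::real)\<^sup>2"
  using sum_squares_bound[of x y] sum_squares_bound[of "- x" y] by (simp add: abs_le_iff)

lemma ode3_energy_bound: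
  fixes h0 h1 h2 m m' M :: real
  assumes "\<bar>m\<bar> \<le> M" "\<bar>m'\<bar> \<le> M"
  shows "\<bar>2 * h0 * h1 + 2 * h1 * h2 + 2 * h2 * (- 4 * m * h1 - 2 * m' * h0)\<bar>
           \<le> (2 + 6 * M) * (h0\<^sup>2 + h1\<^sup>2 + h2\<^sup>2)"
proof -
  have "2 * h0 * h1 + 2 * h1 * h2 + 2 * h2 * (- 4 * m * h1 - 2 * m' * h0)
        = 2 * h0 * h1 + 2 * h1 * h2 + (- 4 * m) * (2 * h1 * h2) + (- 2 * m') * (2 * h0 * h2)"
    by (simp add: algebra_simps)
  moreover have "\<bar>a + b + c + d\<bar> \<le> \<bar>a\<bar> + \<bar>b\<bar> + \<bar>c\<bar> + \<bar>d\<bar>" for a b c d :: real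
    using abs_triangle_ineq[of "a + b + c" d] abs_triangle_ineq[of "a + b" c] abs_triangle_ineq[of a b]
    by linarith
  moreover have "\<bar>- 4 * m * (2 * h1 * h2)\<bar> = 4 * \<bar>m\<bar> * \<bar>2 * h1 * h2\<bar>"
    and "\<bar>- 2 * m' * (2 * h0 * h2)\<bar> = 2 * \<bar>m'\<bar> * \<bar>2 * h0 * h2\<bar>"
    by (simp_all add: abs_mult)
  ultimately have "\<bar>2 * h0 * h1 + 2 * h1 * h2 + 2 * h2 * (- 4 * m * h1 - 2 * m' * h0)\<bar>
        \<le> \<bar>2 * h0 * h1\<bar> + \<bar>2 * h1 * h2\<bar> + 4 * \<bar>m\<bar> * \<bar>2 * h1 * h2\<bar> + 2 * \<bar>m'\<bar> * \<bar>2 * h0 * h2\<bar>"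
    by metis
  also have "\<dots> \<le> (h0\<^sup>2 + h1\<^sup>2) + (h1\<^sup>2 + h2\<^sup>2) + 4 * M * (h1\<^sup>2 + h2\<^sup>2) + 2 * M * (h0\<^sup>2 + h2\<^sup>2)"
    using assms abs_two_mult_le_sum_squares[of h0 h1] abs_two_mult_le_sum_squares[of h1 h2]
      abs_two_mult_le_sum_squares[of h0 h2]
    by (intro add_mono mult_mono) auto
  also have "\<dots> \<le> (2 + 6 * M) * (h0\<^sup>2 + h1\<^sup>2 + h2\<^sup>2)"
    using assms by (simp add: algebra_simps)
  finally show ?thesis .
qed

lemma ode3_sol_unique:
  assumes J: "is_interval J"
    and \<mu>: "\<forall>x\<in>J. \<mu> differentiable (at x) \<and> deriv \<mu> differentiable (at x)"
    and y: "ode3_sol \<mu> J y0 y1 y2" and w: "ode3_sol \<mu> J w0 w1 w2"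
    and "x0 \<in> J" "x1 \<in> J"
    and "y0 x0 = w0 x0" "y1 x0 = w1 x0" "y2 x0 = w2 x0"
  shows "y0 x1 = w0 x1 \<and> y1 x1 = w1 x1 \<and> y2 x1 = w2 x1"
proof -
  define K where "K = closed_segment x0 x1"
  have "K \<subseteq> J"
    unfolding K_def using J \<open>x0 \<in> J\<close> \<open>x1 \<in> J\<close> by (simp add: closed_segment_subset is_interval_convex)
  then have "continuous_on K \<mu>" "continuous_on K (deriv \<mu>)"
    using \<mu> by (auto intro!: continuous_at_imp_continuous_on differentiable_imp_continuous_within)
  then have "continuous_on K (\<lambda>t. \<bar>\<mu> t\<bar> + \<bar>deriv \<mu> t\<bar>)"
    by (intro continuous_intros)
  then obtain M where "M \<ge> 0" "\<And>t. t \<in> K \<Longrightarrow> norm (\<bar>\<mu> t\<bar> + \<bar>deriv \<mu> t\<bar>) \<le> M"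
    using continuous_on_compact_bound compact_segment unfolding K_def by blast
  then have M: "\<bar>\<mu> t\<bar> \<le> M" "\<bar>deriv \<mu> t\<bar> \<le> M" if "t \<in> K" for t
    using that abs_ge_zero[of "\<mu> t"] abs_ge_zero[of "deriv \<mu> t"] by fastforce+
  define E where "E t = (y0 t - w0 t)\<^sup>2 + (y1 t - w1 t)\<^sup>2 + (y2 t - w2 t)\<^sup>2" for t
  define E' where "E' t = 2 * (y0 t - w0 t) * (y1 t - w1 t) + 2 * (y1 t - w1 t) * (y2 t - w2 t)
    + 2 * (y2 t - w2 t) * (- 4 * \<mu> t * (y1 t - w1 t) - 2 * deriv \<mu> t * (y0 t - w0 t))" for t
  have "(E has_real_derivative E' t) (at t) \<and> \<bar>E' t\<bar> \<le> (2 + 6 * M) * E t" if "t \<in> K" for t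
  proof
    from that \<open>K \<subseteq> J\<close> y w show "(E has_real_derivative E' t) (at t)"
      unfolding E_def E'_def ode3_sol_def
      by (auto intro!: derivative_eq_intros simp: algebra_simps)
    show "\<bar>E' t\<bar> \<le> (2 + 6 * M) * E t"
      unfolding E_def E'_def using ode3_energy_bound M[OF that] by blast
  qed
  moreover have "E x0 = 0"
    unfolding E_def using assms by simp
  ultimately have "E x1 = 0"
    by (intro gronwall_zero[of x0 x1 E]) (auto simp: K_def)
  then show ?thesis
    unfolding E_def by (simp add: add_nonneg_eq_0_iff)
qed

lemma ode3_sol_subset: "ode3_sol \<mu> J f f1 f2 \<Longrightarrow> J' \<subseteq> J \<Longrightarrow> ode3_sol \<mu> J' f f1 f2"
  unfolding ode3_sol_def by blast

lemma has_real_derivative_glue: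
  fixes f g :: "real \<Rightarrow> real"
  assumes "open J" "open J'" "\<forall>s\<in>J \<inter> J'. f s = g s"
    and "\<forall>s\<in>J. (f has_real_derivative f' s) (at s)" "\<forall>s\<in>J'. (g has_real_derivative g' s) (at s)"
    and "t \<in> J \<union> J'"
  shows "((\<lambda>s. if s \<in> J then f s else g s) has_real_derivative (if t \<in> J then f' t else g' t)) (at t)"
proof (cases "t \<in> J")
  case True
  with assms show ?thesis
    by (auto intro: has_field_derivative_transform_within_open[of f _ t J])
next
  case False
  with assms show ?thesis
    by (auto intro: has_field_derivative_transform_within_open[of g _ t J'])
qed

lemma ode3_sol_glue:
  assumes "open J" "open J'" "ode3_sol \<mu> J y0 y1 y2" "ode3_sol \<mu> J' w0 w1 w2"
    and "\<forall>s\<in>J \<inter> J'. y0 s = w0 s \<and> y1 s = w1 s \<and> y2 s = w2 s"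
  shows "ode3_sol \<mu> (J \<union> J') (\<lambda>s. if s \<in> J then y0 s else w0 s) (\<lambda>s. if s \<in> J then y1 s else w1 s)
           (\<lambda>s. if s \<in> J then y2 s else w2 s)"
  unfolding ode3_sol_def
proof (intro ballI conjI)
  fix t assume "t \<in> J \<union> J'"
  note glue = has_real_derivative_glue[OF \<open>open J\<close> \<open>open J'\<close> _ _ _ this]
  show "((\<lambda>s. if s \<in> J then y0 s else w0 s) has_real_derivative (if t \<in> J then y1 t else w1 t)) (at t)"
    "((\<lambda>s. if s \<in> J then y1 s else w1 s) has_real_derivative (if t \<in> J then y2 t else w2 t)) (at t)"
    by (rule glue; use assms(3-5) in \<open>auto simp: ode3_sol_def\<close>)+
  have "((\<lambda>s. if s \<in> J then y2 s else w2 s) has_real_derivative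
          (if t \<in> J then - 4 * \<mu> t * y1 t - 2 * deriv \<mu> t * y0 t
           else - 4 * \<mu> t * w1 t - 2 * deriv \<mu> t * w0 t)) (at t)"
    by (rule glue; use assms(3-5) in \<open>auto simp: ode3_sol_def\<close>)
  then show "((\<lambda>s. if s \<in> J then y2 s else w2 s) has_real_derivative
      - 4 * \<mu> t * (if t \<in> J then y1 t else w1 t) - 2 * deriv \<mu> t * (if t \<in> J then y0 t else w0 t)) (at t)"
    by (cases "t \<in> J") simp_all
qed

lemma ode3_sol_union:
  assumes \<mu>: "\<forall>x\<in>J \<union> J'. \<mu> differentiable (at x) \<and> deriv \<mu> differentiable (at x)"
    and J: "open J" "is_interval J" and J': "open J'" "is_interval J'"
    and y: "ode3_sol \<mu> J y0 y1 y2" and w: "ode3_sol \<mu> J' w0 w1 w2"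
    and "x \<in> J" "x \<in> J'" "y0 x = w0 x" "y1 x = w1 x" "y2 x = w2 x"
  obtains z0 z1 z2 where "ode3_sol \<mu> (J \<union> J') z0 z1 z2"
    and "\<forall>s\<in>J. z0 s = y0 s \<and> z1 s = y1 s \<and> z2 s = y2 s"
    and "\<forall>s\<in>J'. z0 s = w0 s \<and> z1 s = w1 s \<and> z2 s = w2 s"
proof -
  have agree: "\<forall>s\<in>J \<inter> J'. y0 s = w0 s \<and> y1 s = w1 s \<and> y2 s = w2 s"
  proof
    fix s assume "s \<in> J \<inter> J'"
    with assms show "y0 s = w0 s \<and> y1 s = w1 s \<and> y2 s = w2 s"
      by (intro ode3_sol_unique[of "J \<inter> J'" \<mu> y0 y1 y2 w0 w1 w2 x s])
        (auto simp: is_interval_Int intro: ode3_sol_subset)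
  qed
  show thesis
    by (rule that[OF ode3_sol_glue[OF J(1) J'(1) y w agree]]) (use agree in auto)
qed

lemma ode3_sol_cong_open:
  assumes "ode3_sol \<mu> J g g1 g2" "open J" and eq: "\<forall>x\<in>J. f x = g x \<and> f1 x = g1 x \<and> f2 x = g2 x"
  shows "ode3_sol \<mu> J f f1 f2"
  unfolding ode3_sol_def
proof (intro ballI conjI)
  fix x assume x: "x \<in> J"
  note transform = has_field_derivative_transform_within_open[OF _ \<open>open J\<close> x]
  from assms(1) x have d: "(g has_real_derivative g1 x) (at x)" "(g1 has_real_derivative g2 x) (at x)"
    "(g2 has_real_derivative - 4 * \<mu> x * g1 x - 2 * deriv \<mu> x * g x) (at x)"
    unfolding ode3_sol_def by blast+
  have at_x: "f x = g x" "f1 x = g1 x" "f2 x = g2 x" and on_J: "\<And>y. y \<in> J \<Longrightarrow> g y = f y"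
    "\<And>y. y \<in> J \<Longrightarrow> g1 y = f1 y" "\<And>y. y \<in> J \<Longrightarrow> g2 y = f2 y"
    using eq x by auto
  show "(f has_real_derivative f1 x) (at x)"
    unfolding at_x by (rule transform[OF d(1) on_J(1)])
  show "(f1 has_real_derivative f2 x) (at x)"
    unfolding at_x by (rule transform[OF d(2) on_J(2)])
  show "(f2 has_real_derivative - 4 * \<mu> x * f1 x - 2 * deriv \<mu> x * f x) (at x)"
    unfolding at_x by (rule transform[OF d(3) on_J(3)])
qed

lemma ode3_sol_local:
  assumes "\<And>x. x \<in> S \<Longrightarrow> \<exists>J. x \<in> J \<and> ode3_sol \<mu> J f f1 f2"
  shows "ode3_sol \<mu> S f f1 f2"
  using assms unfolding ode3_sol_def by blast

section \<open>Solutions as quadratic forms in solutions of \<open>\<phi>'' + \<mu> \<phi> = 0\<close>\<close>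

lemma ode2_sol_pairI:
  assumes "\<forall>x\<in>J. (\<phi>0 has_real_derivative d0 x) (at x) \<and> (d0 has_real_derivative dd0 x) (at x) \<and>
      (\<phi>1 has_real_derivative d1 x) (at x) \<and> (d1 has_real_derivative dd1 x) (at x) \<and>
      dd0 x + \<mu> x * \<phi>0 x = 0 \<and> dd1 x + \<mu> x * \<phi>1 x = 0 \<and> \<phi>0 x * d1 x - \<phi>1 x * d0 x = 1"
  shows "ode2_sol \<mu> J \<phi>0 d0" "ode2_sol \<mu> J \<phi>1 d1" "\<forall>x\<in>J. \<phi>0 x * d1 x - \<phi>1 x * d0 x = 1"
proof -
  have "dd0 x = - \<mu> x * \<phi>0 x" "dd1 x = - \<mu> x * \<phi>1 x" if "x \<in> J" for x
    using assms that by (auto simp: eq_neg_iff_add_eq_0)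
  with assms show "ode2_sol \<mu> J \<phi>0 d0" "ode2_sol \<mu> J \<phi>1 d1" "\<forall>x\<in>J. \<phi>0 x * d1 x - \<phi>1 x * d0 x = 1"
    unfolding ode2_sol_def by auto
qed

lemma ode2_sol_mult:
  assumes \<mu>: "\<forall>x\<in>J. \<mu> differentiable (at x)" and "ode2_sol \<mu> J u du" "ode2_sol \<mu> J v dv"
  shows "ode3_sol \<mu> J (\<lambda>x. u x * v x) (\<lambda>x. du x * v x + u x * dv x)
           (\<lambda>x. 2 * du x * dv x - 2 * \<mu> x * u x * v x)"
  unfolding ode3_sol_def
proof (intro ballI conjI)
  fix x assume "x \<in> J"
  with assms have d: "(u has_real_derivative du x) (at x)" "(du has_real_derivative - \<mu> x * u x) (at x)"
    "(v has_real_derivative dv x) (at x)" "(dv has_real_derivative - \<mu> x * v x) (at x)"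
    "(\<mu> has_real_derivative deriv \<mu> x) (at x)"
    by (auto simp: ode2_sol_def DERIV_deriv_iff_real_differentiable)
  show "((\<lambda>x. u x * v x) has_real_derivative du x * v x + u x * dv x) (at x)"
    using d by (auto intro!: derivative_eq_intros)
  show "((\<lambda>x. du x * v x + u x * dv x) has_real_derivative 2 * du x * dv x - 2 * \<mu> x * u x * v x) (at x)"
    using d by (auto intro!: derivative_eq_intros simp: algebra_simps)
  show "((\<lambda>x. 2 * du x * dv x - 2 * \<mu> x * u x * v x) has_real_derivative
          - 4 * \<mu> x * (du x * v x + u x * dv x) - 2 * deriv \<mu> x * (u x * v x)) (at x)"
    using d by (auto intro!: derivative_eq_intros simp: algebra_simps)
qed

lemma ode3_sol_lincomb:
  assumes "ode3_sol \<mu> J f f1 f2" "ode3_sol \<mu> J g g1 g2"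
  shows "ode3_sol \<mu> J (\<lambda>x. c * f x + d * g x) (\<lambda>x. c * f1 x + d * g1 x) (\<lambda>x. c * f2 x + d * g2 x)"
  using assms unfolding ode3_sol_def by (auto intro!: derivative_eq_intros simp: algebra_simps)

lemma ode3_sol_pairing_const:
  assumes J: "is_interval J" and \<mu>: "\<forall>x\<in>J. \<mu> differentiable (at x)"
    and "ode3_sol \<mu> J f f1 f2" "ode3_sol \<mu> J g g1 g2"
  shows "\<exists>c. \<forall>x\<in>J. f x * g2 x - f1 x * g1 x + f2 x * g x + 4 * \<mu> x * f x * g x = c"
proof (rule has_field_derivative_zero_constant)
  show "convex J"
    using J by (simp add: is_interval_convex)
next
  fix x assume "x \<in> J"
  with assms have "(\<mu> has_real_derivative deriv \<mu> x) (at x)"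
    by (auto simp: DERIV_deriv_iff_real_differentiable)
  with \<open>x \<in> J\<close> assms(3,4)
  have "((\<lambda>x. f x * g2 x - f1 x * g1 x + f2 x * g x + 4 * \<mu> x * f x * g x) has_real_derivative 0) (at x)"
    unfolding ode3_sol_def by (auto intro!: derivative_eq_intros simp: algebra_simps)
  then show "((\<lambda>x. f x * g2 x - f1 x * g1 x + f2 x * g x + 4 * \<mu> x * f x * g x) has_real_derivative 0)
               (at x within J)"
    by (rule has_field_derivative_at_within)
qed

lemma ode3_sol_iff_quadratic:
  assumes J: "open J" "is_interval J" and \<mu>: "\<forall>x\<in>J. \<mu> differentiable (at x)"
    and u: "ode2_sol \<mu> J u du" and v: "ode2_sol \<mu> J v dv"
    and W: "\<forall>x\<in>J. u x * dv x - v x * du x = 1"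
  shows "(\<exists>f1 f2. ode3_sol \<mu> J f f1 f2) \<longleftrightarrow>
           (\<exists>c0 c1 c2. \<forall>x\<in>J. f x = - c0 * (u x)\<^sup>2 - 2 * c1 * u x * v x - c2 * (v x)\<^sup>2)"
proof
  assume "\<exists>f1 f2. ode3_sol \<mu> J f f1 f2"
  then obtain f1 f2 where f: "ode3_sol \<mu> J f f1 f2"
    by blast
  define B where "B \<phi> d\<phi> \<psi> d\<psi> x = f x * (2 * d\<phi> x * d\<psi> x - 2 * \<mu> x * \<phi> x * \<psi> x)
    - f1 x * (d\<phi> x * \<psi> x + \<phi> x * d\<psi> x) + f2 x * (\<phi> x * \<psi> x) + 4 * \<mu> x * f x * (\<phi> x * \<psi> x)"
    for \<phi> d\<phi> \<psi> d\<psi> :: "real \<Rightarrow> real" and x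
  have "\<exists>C. \<forall>x\<in>J. B \<phi> d\<phi> \<psi> d\<psi> x = C" if "ode2_sol \<mu> J \<phi> d\<phi>" "ode2_sol \<mu> J \<psi> d\<psi>" for \<phi> d\<phi> \<psi> d\<psi>
    unfolding B_def using ode3_sol_pairing_const[OF J(2) \<mu> f ode2_sol_mult[OF \<mu> that]] .
  then obtain Cuu Cuv Cvv
    where C: "\<forall>x\<in>J. B u du u du x = Cuu" "\<forall>x\<in>J. B u du v dv x = Cuv" "\<forall>x\<in>J. B v dv v dv x = Cvv"
    using u v by meson
  have "f x = - (- Cvv / 2) * (u x)\<^sup>2 - 2 * (Cuv / 2) * u x * v x - (- Cuu / 2) * (v x)\<^sup>2" if "x \<in> J" for x
  proof -
    have "B v dv v dv x * (u x)\<^sup>2 - 2 * B u du v dv x * u x * v x + B u du u du x * (v x)\<^sup>2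
        = 2 * f x * (u x * dv x - v x * du x)\<^sup>2"
      unfolding B_def by (simp add: power2_eq_square algebra_simps)
    with C W that show ?thesis
      by (simp add: field_simps)
  qed
  then show "\<exists>c0 c1 c2. \<forall>x\<in>J. f x = - c0 * (u x)\<^sup>2 - 2 * c1 * u x * v x - c2 * (v x)\<^sup>2"
    by blast
next
  assume "\<exists>c0 c1 c2. \<forall>x\<in>J. f x = - c0 * (u x)\<^sup>2 - 2 * c1 * u x * v x - c2 * (v x)\<^sup>2"
  then obtain c0 c1 c2 where f: "\<forall>x\<in>J. f x = - c0 * (u x)\<^sup>2 - 2 * c1 * u x * v x - c2 * (v x)\<^sup>2"
    by blast
  note uv_vv = ode3_sol_lincomb[OF ode2_sol_mult[OF \<mu> u v] ode2_sol_mult[OF \<mu> v v], where c = "- 2 * c1" and d = "- c2"]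
  note combination = ode3_sol_lincomb[OF ode2_sol_mult[OF \<mu> u u] uv_vv, where c = "- c0" and d = 1]
  then obtain g1 g2
    where g: "ode3_sol \<mu> J (\<lambda>x. - c0 * (u x * u x) + 1 * (- 2 * c1 * (u x * v x) + - c2 * (v x * v x))) g1 g2"
    by blast
  have "\<forall>x\<in>J. f x = - c0 * (u x * u x) + 1 * (- 2 * c1 * (u x * v x) + - c2 * (v x * v x))
      \<and> g1 x = g1 x \<and> g2 x = g2 x"
    using f by (simp add: power2_eq_square algebra_simps)
  with ode3_sol_cong_open[OF g J(1)] show "\<exists>f1 f2. ode3_sol \<mu> J f f1 f2"
    by blast
qed

section \<open>Jets on the half-plane that depend on \<open>x\<close> only\<close>

lemma has_derivative_fst_slice:
  assumes "(G has_derivative G') (at (t, z))"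
  shows "((\<lambda>s. G (s, z)) has_real_derivative G' (1, 0)) (at t)"
proof -
  have "((\<lambda>s. G (s, z)) has_derivative (\<lambda>h. G' (h, 0))) (at t)"
    using has_derivative_compose[OF has_derivative_Pair[OF has_derivative_ident has_derivative_const] assms]
    by simp
  moreover have "(\<lambda>h. G' (h, 0)) = (*) (G' (1, 0))"
  proof
    fix h
    have "G' (h *\<^sub>R (1, 0)) = h *\<^sub>R G' (1, 0)"
      by (rule linear_cmul[OF has_derivative_linear[OF assms]])
    then show "G' (h, 0) = G' (1, 0) * h" by simp
  qed
  ultimately show ?thesis
    unfolding has_field_derivative_def by simp
qed

lemma has_derivative_snd_slice:
  assumes "(G has_derivative G') (at (t, z))"
  shows "((\<lambda>s. G (t, s)) has_real_derivative G' (0, 1)) (at z)"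
proof -
  have "((\<lambda>s. G (t, s)) has_derivative (\<lambda>h. G' (0, h))) (at z)"
    using has_derivative_compose[OF has_derivative_Pair[OF has_derivative_const has_derivative_ident] assms]
    by simp
  moreover have "(\<lambda>h. G' (0, h)) = (*) (G' (0, 1))"
  proof
    fix h
    have "G' (h *\<^sub>R (0, 1)) = h *\<^sub>R G' (0, 1)"
      by (rule linear_cmul[OF has_derivative_linear[OF assms]])
    then show "G' (0, h) = G' (0, 1) * h" by simp
  qed
  ultimately show ?thesis
    unfolding has_field_derivative_def by simp
qed

lemma convex_vertical_section:
  fixes S :: "(real \<times> real) set"
  assumes "convex S"
  shows "convex {s. (t, s) \<in> S}"
proof (rule convexI)
  fix x y u v :: real
  assume "x \<in> {s. (t, s) \<in> S}" "y \<in> {s. (t, s) \<in> S}" "0 \<le> u" "0 \<le> v" "u + v = 1"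
  then have "u *\<^sub>R (t, x) + v *\<^sub>R (t, y) \<in> S"
    by (intro convexD[OF assms]) simp_all
  moreover have "u *\<^sub>R (t, x) + v *\<^sub>R (t, y) = (t, u *\<^sub>R x + v *\<^sub>R y)"
    using \<open>u + v = 1\<close> by (simp flip: distrib_right)
  ultimately show "u *\<^sub>R x + v *\<^sub>R y \<in> {s. (t, s) \<in> S}"
    by (metis mem_Collect_eq)
qed

lemma has_derivative_fst_imp_snd_const:
  fixes G :: "real \<times> real \<Rightarrow> real"
  assumes "convex S" "(t, z) \<in> S" "(t, z') \<in> S"
    and "\<And>q. q \<in> S \<Longrightarrow> \<exists>c. (G has_derivative (\<lambda>v. c * fst v)) (at q)"
  shows "G (t, z) = G (t, z')"
proof -
  have "\<exists>c. \<forall>s\<in>{s. (t, s) \<in> S}. G (t, s) = c"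
  proof (rule has_field_derivative_zero_constant[OF convex_vertical_section[OF assms(1)]])
    fix s assume "s \<in> {s. (t, s) \<in> S}"
    then obtain c where "(G has_derivative (\<lambda>v. c * fst v)) (at (t, s))"
      using assms(4) by blast
    from has_derivative_snd_slice[OF this]
    show "((\<lambda>s. G (t, s)) has_real_derivative 0) (at s within {s. (t, s) \<in> S})"
      by (simp add: has_field_derivative_at_within)
  qed
  with assms(2,3) show ?thesis by auto
qed

definition ode3_sol_plane ::
  "(real \<Rightarrow> real) \<Rightarrow> (real \<times> real) set \<Rightarrow> (real \<times> real \<Rightarrow> real) \<Rightarrow> (real \<times> real \<Rightarrow> real)
     \<Rightarrow> (real \<times> real \<Rightarrow> real) \<Rightarrow> bool" where
  "ode3_sol_plane \<mu> U F F1 F2 \<longleftrightarrow> (\<forall>x z. (x, z) \<in> U \<longrightarrow>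
     (F has_derivative (\<lambda>v. F1 (x, z) * fst v)) (at (x, z)) \<and>
     (F1 has_derivative (\<lambda>v. F2 (x, z) * fst v)) (at (x, z)) \<and>
     (F2 has_derivative (\<lambda>v. (- 4 * \<mu> x * F1 (x, z) - 2 * deriv \<mu> x * F (x, z)) * fst v)) (at (x, z)))"

lemma ode3_sol_plane_local:
  assumes sol: "ode3_sol_plane \<mu> U F F1 F2" and ball: "ball (x0, z0) r \<subseteq> U"
  shows "\<And>t z. (t, z) \<in> ball (x0, z0) r \<Longrightarrow> F (t, z) = F (t, z0) \<and> F1 (t, z) = F1 (t, z0) \<and> F2 (t, z) = F2 (t, z0)"
    and "ode3_sol \<mu> (ball x0 r) (\<lambda>t. F (t, z0)) (\<lambda>t. F1 (t, z0)) (\<lambda>t. F2 (t, z0))"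
proof -
  have horizontal: "(t, z0) \<in> ball (x0, z0) r \<longleftrightarrow> t \<in> ball x0 r" for t
    by (simp add: dist_Pair_Pair)
  have x_only: "\<exists>c. (G has_derivative (\<lambda>v. c * fst v)) (at q)" if "G \<in> {F, F1, F2}" "q \<in> ball (x0, z0) r" for G q
    using sol ball that unfolding ode3_sol_plane_def by (cases q) blast
  show "F (t, z) = F (t, z0) \<and> F1 (t, z) = F1 (t, z0) \<and> F2 (t, z) = F2 (t, z0)"
    if tz: "(t, z) \<in> ball (x0, z0) r" for t z
  proof -
    have "dist x0 t \<le> dist (x0, z0) (t, z)"
      using dist_fst_le[of "(x0, z0)" "(t, z)"] by simp
    with tz have "(t, z0) \<in> ball (x0, z0) r"
      unfolding horizontal by simp
    with tz x_only show ?thesis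
      by (auto intro!: has_derivative_fst_imp_snd_const[OF convex_ball])
  qed
  show "ode3_sol \<mu> (ball x0 r) (\<lambda>t. F (t, z0)) (\<lambda>t. F1 (t, z0)) (\<lambda>t. F2 (t, z0))"
    unfolding ode3_sol_def
  proof (intro ballI)
    fix t assume "t \<in> ball x0 r"
    then have "(t, z0) \<in> U"
      using ball horizontal by blast
    with sol show "((\<lambda>t. F (t, z0)) has_real_derivative F1 (t, z0)) (at t) \<and>
        ((\<lambda>t. F1 (t, z0)) has_real_derivative F2 (t, z0)) (at t) \<and>
        ((\<lambda>t. F2 (t, z0)) has_real_derivative - 4 * \<mu> t * F1 (t, z0) - 2 * deriv \<mu> t * F (t, z0)) (at t)"
      unfolding ode3_sol_plane_def using has_derivative_fst_slice by fastforce
  qed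
qed

text \<open>Joinability by one solution on an interval is the equivalence relation that carries the
  local \<open>z\<close>-independence of the jets across \<open>U\<close>.\<close>

definition ode3_sol_joins ::
  "(real \<Rightarrow> real) \<Rightarrow> real set \<Rightarrow> (real \<times> real \<Rightarrow> real) \<Rightarrow> (real \<times> real \<Rightarrow> real) \<Rightarrow> (real \<times> real \<Rightarrow> real)
     \<Rightarrow> real \<times> real \<Rightarrow> real \<times> real \<Rightarrow> bool" where
  "ode3_sol_joins \<mu> I F F1 F2 q q' \<longleftrightarrow>
     (\<exists>J y0 y1 y2. open J \<and> is_interval J \<and> J \<subseteq> I \<and> ode3_sol \<mu> J y0 y1 y2 \<and>
        (\<forall>p\<in>{q, q'}. fst p \<in> J \<and> (y0 (fst p), y1 (fst p), y2 (fst p)) = (F p, F1 p, F2 p)))"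

lemma ode3_sol_joinsI:
  assumes "open J" "is_interval J" "J \<subseteq> I" "ode3_sol \<mu> J y0 y1 y2"
    and "\<forall>p\<in>{q, q'}. fst p \<in> J \<and> (y0 (fst p), y1 (fst p), y2 (fst p)) = (F p, F1 p, F2 p)"
  shows "ode3_sol_joins \<mu> I F F1 F2 q q'"
  using assms unfolding ode3_sol_joins_def by blast

lemma ode3_sol_joins_sym: "ode3_sol_joins \<mu> I F F1 F2 q q' \<Longrightarrow> ode3_sol_joins \<mu> I F F1 F2 q' q"
  unfolding ode3_sol_joins_def by (simp add: insert_commute)

lemma ode3_sol_joins_trans:
  assumes \<mu>: "\<forall>x\<in>I. \<mu> differentiable (at x) \<and> deriv \<mu> differentiable (at x)"
    and "ode3_sol_joins \<mu> I F F1 F2 q q'" "ode3_sol_joins \<mu> I F F1 F2 q' q''"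
  shows "ode3_sol_joins \<mu> I F F1 F2 q q''"
proof -
  obtain J y0 y1 y2 where J: "open J" "is_interval J" "J \<subseteq> I" "ode3_sol \<mu> J y0 y1 y2"
    and y: "\<forall>p\<in>{q, q'}. fst p \<in> J \<and> (y0 (fst p), y1 (fst p), y2 (fst p)) = (F p, F1 p, F2 p)"
    using assms(2) unfolding ode3_sol_joins_def by blast
  obtain J' w0 w1 w2 where J': "open J'" "is_interval J'" "J' \<subseteq> I" "ode3_sol \<mu> J' w0 w1 w2"
    and w: "\<forall>p\<in>{q', q''}. fst p \<in> J' \<and> (w0 (fst p), w1 (fst p), w2 (fst p)) = (F p, F1 p, F2 p)"
    using assms(3) unfolding ode3_sol_joins_def by blast
  have \<mu>': "\<forall>x\<in>J \<union> J'. \<mu> differentiable (at x) \<and> deriv \<mu> differentiable (at x)"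
    using \<mu> J(3) J'(3) by blast
  have q': "fst q' \<in> J" "fst q' \<in> J'"
    and "y0 (fst q') = w0 (fst q')" "y1 (fst q') = w1 (fst q')" "y2 (fst q') = w2 (fst q')"
    using y w by auto
  then obtain z0 z1 z2 where z: "ode3_sol \<mu> (J \<union> J') z0 z1 z2"
    and zy: "\<forall>s\<in>J. z0 s = y0 s \<and> z1 s = y1 s \<and> z2 s = y2 s"
    and zw: "\<forall>s\<in>J'. z0 s = w0 s \<and> z1 s = w1 s \<and> z2 s = w2 s"
    by (rule ode3_sol_union[OF \<mu>' J(1,2) J'(1,2) J(4) J'(4)])
  have "is_interval (J \<union> J')"
    using J(2) J'(2) q' by (intro is_real_interval_union) auto
  moreover have "J \<union> J' \<subseteq> I"
    using J(3) J'(3) by blast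
  moreover have "fst q \<in> J \<union> J' \<and> (z0 (fst q), z1 (fst q), z2 (fst q)) = (F q, F1 q, F2 q)"
    using y zy by auto
  moreover have "fst q'' \<in> J \<union> J' \<and> (z0 (fst q''), z1 (fst q''), z2 (fst q'')) = (F q'', F1 q'', F2 q'')"
    using w zw by auto
  ultimately show ?thesis
    by (intro ode3_sol_joinsI[OF open_Un[OF J(1) J'(1)] _ _ z]) auto
qed

lemma ode3_sol_plane_joins_near:
  assumes sol: "ode3_sol_plane \<mu> U F F1 F2" and "open U" "q0 \<in> U"
  obtains r where "r > 0" "ball q0 r \<subseteq> U" "\<forall>q\<in>ball q0 r. ode3_sol_joins \<mu> (fst ` U) F F1 F2 q0 q"
proof -
  obtain x0 z0 where q0: "q0 = (x0, z0)"
    by (cases q0) blast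
  obtain r where r: "r > 0" "ball q0 r \<subseteq> U"
    using assms(2,3) open_contains_ball by blast
  note local = ode3_sol_plane_local[OF sol r(2)[unfolded q0]]
  have horizontal: "(t, z0) \<in> ball q0 r" if "t \<in> ball x0 r" for t
    using that by (simp add: q0 dist_Pair_Pair)
  have sub: "ball x0 r \<subseteq> fst ` U"
  proof
    fix t assume "t \<in> ball x0 r"
    with horizontal r(2) have "(t, z0) \<in> U" by blast
    then show "t \<in> fst ` U" by (rule rev_image_eqI) simp
  qed
  have jets: "\<forall>p\<in>{q0, q}. fst p \<in> ball x0 r \<and> (F (fst p, z0), F1 (fst p, z0), F2 (fst p, z0)) = (F p, F1 p, F2 p)"
    if "q \<in> ball q0 r" for q
  proof -
    obtain t z where q: "q = (t, z)"
      by (cases q) blast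
    have "dist x0 t \<le> dist q0 q"
      using dist_fst_le[of q0 q] by (simp add: q0 q)
    with that \<open>r > 0\<close> local(1)[of t z] show ?thesis
      by (simp add: q0 q)
  qed
  have "ode3_sol_joins \<mu> (fst ` U) F F1 F2 q0 q" if "q \<in> ball q0 r" for q
    by (rule ode3_sol_joinsI[OF open_ball is_interval_ball_real sub local(2) jets[OF that]])
  with r that show thesis
    by blast
qed

lemma ode3_sol_plane_joins:
  assumes sol: "ode3_sol_plane \<mu> U F F1 F2" and U: "open U" "connected U"
    and \<mu>: "\<forall>x\<in>fst ` U. \<mu> differentiable (at x) \<and> deriv \<mu> differentiable (at x)"
    and "q \<in> U" "q' \<in> U"
  shows "ode3_sol_joins \<mu> (fst ` U) F F1 F2 q q'"
proof (rule connected_equivalence_relation[OF U(2) \<open>q \<in> U\<close> \<open>q' \<in> U\<close>])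
  fix q0 assume "q0 \<in> U"
  then obtain r where "r > 0" "ball q0 r \<subseteq> U" "\<forall>q\<in>ball q0 r. ode3_sol_joins \<mu> (fst ` U) F F1 F2 q0 q"
    using ode3_sol_plane_joins_near[OF sol U(1)] by blast
  then show "\<exists>T. openin (top_of_set U) T \<and> q0 \<in> T \<and> (\<forall>q\<in>T. ode3_sol_joins \<mu> (fst ` U) F F1 F2 q0 q)"
    by (intro exI[of _ "ball q0 r"]) (simp add: open_subset)
qed (auto intro: ode3_sol_joins_sym ode3_sol_joins_trans[OF \<mu>])

lemma ode3_sol_plane_factor:
  assumes sol: "ode3_sol_plane \<mu> U F F1 F2" and U: "open U" "connected U"
    and \<mu>: "\<forall>x\<in>fst ` U. \<mu> differentiable (at x) \<and> deriv \<mu> differentiable (at x)"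
  obtains f f1 f2 where "ode3_sol \<mu> (fst ` U) f f1 f2"
    and "\<And>q. q \<in> U \<Longrightarrow> F q = f (fst q) \<and> F1 q = f1 (fst q) \<and> F2 q = f2 (fst q)"
proof -
  define \<zeta> where "\<zeta> x = (SOME z. (x, z) \<in> U)" for x
  define f where "f x = F (x, \<zeta> x)" for x
  define f1 where "f1 x = F1 (x, \<zeta> x)" for x
  define f2 where "f2 x = F2 (x, \<zeta> x)" for x
  have fiber: "F q = f (fst q) \<and> F1 q = f1 (fst q) \<and> F2 q = f2 (fst q)" if "q \<in> U" for q
  proof -
    have "(fst q, \<zeta> (fst q)) \<in> U"
      unfolding \<zeta>_def using that by (metis prod.collapse someI)
    from ode3_sol_plane_joins[OF sol U \<mu> that this] show ?thesis
      unfolding ode3_sol_joins_def f_def f1_def f2_def by auto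
  qed
  have "ode3_sol \<mu> (fst ` U) f f1 f2"
  proof (rule ode3_sol_local)
    fix x assume "x \<in> fst ` U"
    then obtain z where "(x, z) \<in> U"
      by force
    then obtain r where r: "r > 0" "ball (x, z) r \<subseteq> U"
      using U(1) open_contains_ball by blast
    have "(t, z) \<in> U" if "t \<in> ball x r" for t
      using that r(2) by (auto simp: dist_Pair_Pair)
    with fiber have "\<forall>t\<in>ball x r. f t = F (t, z) \<and> f1 t = F1 (t, z) \<and> f2 t = F2 (t, z)"
      by fastforce
    with ode3_sol_plane_local(2)[OF sol r(2)] have "ode3_sol \<mu> (ball x r) f f1 f2"
      by (rule ode3_sol_cong_open[OF _ open_ball])
    with r(1) show "\<exists>J. x \<in> J \<and> ode3_sol \<mu> J f f1 f2"
      by (intro exI[of _ "ball x r"]) simp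
  qed
  with fiber that show thesis
    by blast
qed

section \<open>The linear system\<close>

lemma has_derivative_fst_comp:
  "(f has_real_derivative D) (at x) \<Longrightarrow> ((\<lambda>q. f (fst q)) has_derivative (\<lambda>v. D * fst v)) (at (x, z))"
  using has_derivative_compose[OF has_derivative_fst[OF has_derivative_ident]]
  by (fastforce simp: has_field_derivative_def)

text \<open>The three jets are the values of \<open>f, f', f''\<close> forced by the formulas for \<open>a\<close>, \<open>p\<close> and \<open>b\<close>.\<close>

lemma is_solution_ode3_sol_plane:
  assumes sol: "is_solution \<mu> U a b p" and U: "U \<subseteq> {(x, z). z > 0}"
    and \<mu>: "\<forall>x\<in>fst ` U. \<mu> differentiable (at x)"
  shows "ode3_sol_plane \<mu> U (\<lambda>q. a q + 1) (\<lambda>q. (2 * a q + p q + 1) / snd q)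
           (\<lambda>q. 2 * (2 * a q + p q + 1 - (1 + \<mu> (fst q) * (snd q)\<^sup>2) * (a q + 1) - b q) / (snd q)\<^sup>2)"
  unfolding ode3_sol_plane_def
proof (intro allI impI conjI)
  fix x z assume q: "(x, z) \<in> U"
  then have "z > 0"
    using U by auto
  have d\<mu>: "(\<mu> has_real_derivative deriv \<mu> x) (at x)"
    using \<mu> q by (force simp: DERIV_deriv_iff_real_differentiable)
  have da: "(a has_derivative (\<lambda>v. (2 * a (x,z) + p (x,z) + 1) * theta1 x z v)) (at (x, z))"
   and db: "(b has_derivative (\<lambda>v. - 2 * b (x,z) * (K2 \<mu> x z - 1) * theta1 x z v
                 + (2 * b (x,z) - p (x,z) + 1) * theta2 \<mu> x z v)) (at (x, z))"
   and dp: "(p has_derivative (\<lambda>v. - (2 * b (x,z) + (K2 \<mu> x z - 2) * (p (x,z) - 1)) * theta1 x z v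
                 + (2 * a (x,z) + p (x,z) + 1) * theta2 \<mu> x z v)) (at (x, z))"
    using sol q unfolding is_solution_def by blast+
  note rules = derivative_intros da db dp has_derivative_fst_comp[OF d\<mu>]
    has_derivative_snd[OF has_derivative_ident]
  show "((\<lambda>q. a q + 1) has_derivative (\<lambda>v. (2 * a (x, z) + p (x, z) + 1) / snd (x, z) * fst v)) (at (x, z))"
    by (rule has_derivative_eq_rhs, (rule rules)+) (auto simp: theta1_def fun_eq_iff)
  show "((\<lambda>q. (2 * a q + p q + 1) / snd q) has_derivative
          (\<lambda>v. 2 * (2 * a (x, z) + p (x, z) + 1 - (1 + \<mu> (fst (x, z)) * (snd (x, z))\<^sup>2) * (a (x, z) + 1) - b (x, z))
                / (snd (x, z))\<^sup>2 * fst v)) (at (x, z))"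
    by (rule has_derivative_eq_rhs, (rule rules)+)
      (use \<open>z > 0\<close> in \<open>auto simp: theta1_def theta2_def K2_def fun_eq_iff field_simps power2_eq_square\<close>)
  show "((\<lambda>q. 2 * (2 * a q + p q + 1 - (1 + \<mu> (fst q) * (snd q)\<^sup>2) * (a q + 1) - b q) / (snd q)\<^sup>2) has_derivative
          (\<lambda>v. (- 4 * \<mu> x * ((2 * a (x, z) + p (x, z) + 1) / snd (x, z))
                - 2 * deriv \<mu> x * (a (x, z) + 1)) * fst v)) (at (x, z))"
    by (rule has_derivative_eq_rhs, (rule rules)+)
      (use \<open>z > 0\<close> in \<open>auto simp: theta1_def theta2_def K2_def fun_eq_iff field_simps power2_eq_square\<close>)
qed

lemma ode3_sol_is_solution:
  assumes U: "open U" "U \<subseteq> {(x, z). z > 0}" and \<mu>: "\<forall>x\<in>fst ` U. \<mu> differentiable (at x)"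
    and f: "ode3_sol \<mu> (fst ` U) f f1 f2"
    and abp: "\<forall>x z. (x, z) \<in> U \<longrightarrow>
               a (x, z) = -1 + f x \<and>
               b (x, z) = - (1 + \<mu> x * z^2) * f x + z * f1 x - 1/2 * z^2 * f2 x \<and>
               p (x, z) = 1 - 2 * f x + z * f1 x"
  shows "is_solution \<mu> U a b p"
  unfolding is_solution_def
proof (intro allI impI conjI)
  fix x z assume q: "(x, z) \<in> U"
  then have "x \<in> fst ` U" "z > 0"
    using U(2) by force+
  then have d: "(f has_real_derivative f1 x) (at x)" "(f1 has_real_derivative f2 x) (at x)"
    "(f2 has_real_derivative - 4 * \<mu> x * f1 x - 2 * deriv \<mu> x * f x) (at x)"
    and d\<mu>: "(\<mu> has_real_derivative deriv \<mu> x) (at x)"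
    using f \<mu> by (auto simp: ode3_sol_def DERIV_deriv_iff_real_differentiable)
  define A where "A q = -1 + f (fst q)" for q :: "real \<times> real"
  define B where "B q = - (1 + \<mu> (fst q) * (snd q)\<^sup>2) * f (fst q) + snd q * f1 (fst q)
    - 1/2 * (snd q)\<^sup>2 * f2 (fst q)" for q :: "real \<times> real"
  define P where "P q = 1 - 2 * f (fst q) + snd q * f1 (fst q)" for q :: "real \<times> real"
  have on_U: "a q = A q" "b q = B q" "p q = P q" if "q \<in> U" for q
    using abp that unfolding A_def B_def P_def by (cases q; auto)+
  have at_q: "a (x, z) = -1 + f x" "b (x, z) = - (1 + \<mu> x * z^2) * f x + z * f1 x - 1/2 * z^2 * f2 x"
    "p (x, z) = 1 - 2 * f x + z * f1 x"
    using abp q by blast+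
  note transform = has_derivative_transform_within_open[OF _ U(1) q]
  note rules = derivative_intros has_derivative_fst_comp[OF d(1)] has_derivative_fst_comp[OF d(2)]
    has_derivative_fst_comp[OF d(3)] has_derivative_fst_comp[OF d\<mu>] has_derivative_snd[OF has_derivative_ident]
  have "(A has_derivative (\<lambda>v. (2 * a (x,z) + p (x,z) + 1) * theta1 x z v)) (at (x, z))"
    unfolding A_def by (rule has_derivative_eq_rhs, (rule rules)+)
      (use \<open>z > 0\<close> in \<open>auto simp: at_q theta1_def fun_eq_iff field_simps\<close>)
  then show "(a has_derivative (\<lambda>v. (2 * a (x,z) + p (x,z) + 1) * theta1 x z v)) (at (x, z))"
    by (rule transform) (simp add: on_U)
  have "(B has_derivative (\<lambda>v. - 2 * b (x,z) * (K2 \<mu> x z - 1) * theta1 x z v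
                 + (2 * b (x,z) - p (x,z) + 1) * theta2 \<mu> x z v)) (at (x, z))"
    unfolding B_def by (rule has_derivative_eq_rhs, (rule rules)+)
      (use \<open>z > 0\<close> in \<open>auto simp: at_q K2_def theta1_def theta2_def fun_eq_iff
         field_simps power2_eq_square\<close>)
  then show "(b has_derivative (\<lambda>v. - 2 * b (x,z) * (K2 \<mu> x z - 1) * theta1 x z v
                 + (2 * b (x,z) - p (x,z) + 1) * theta2 \<mu> x z v)) (at (x, z))"
    by (rule transform) (simp add: on_U)
  have "(P has_derivative (\<lambda>v. - (2 * b (x,z) + (K2 \<mu> x z - 2) * (p (x,z) - 1)) * theta1 x z v
                 + (2 * a (x,z) + p (x,z) + 1) * theta2 \<mu> x z v)) (at (x, z))"
    unfolding P_def by (rule has_derivative_eq_rhs, (rule rules)+)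
      (use \<open>z > 0\<close> in \<open>auto simp: at_q K2_def theta1_def theta2_def fun_eq_iff
         field_simps power2_eq_square\<close>)
  then show "(p has_derivative (\<lambda>v. - (2 * b (x,z) + (K2 \<mu> x z - 2) * (p (x,z) - 1)) * theta1 x z v
                 + (2 * a (x,z) + p (x,z) + 1) * theta2 \<mu> x z v)) (at (x, z))"
    by (rule transform) (simp add: on_U)
qed

lemma is_solution_iff_ode3_sol:
  assumes U: "open U" "connected U" "U \<subseteq> {(x, z). z > 0}"
    and \<mu>: "\<forall>x\<in>fst ` U. \<mu> differentiable (at x) \<and> deriv \<mu> differentiable (at x)"
  shows "is_solution \<mu> U a b p \<longleftrightarrow>
    (\<exists>f f1 f2. ode3_sol \<mu> (fst ` U) f f1 f2 \<and>
       (\<forall>x z. (x, z) \<in> U \<longrightarrow>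
          a (x, z) = -1 + f x \<and>
          b (x, z) = - (1 + \<mu> x * z^2) * f x + z * f1 x - 1/2 * z^2 * f2 x \<and>
          p (x, z) = 1 - 2 * f x + z * f1 x))" (is "_ \<longleftrightarrow> ?factorized")
proof
  assume "is_solution \<mu> U a b p"
  with U(3) \<mu> have "ode3_sol_plane \<mu> U (\<lambda>q. a q + 1) (\<lambda>q. (2 * a q + p q + 1) / snd q)
           (\<lambda>q. 2 * (2 * a q + p q + 1 - (1 + \<mu> (fst q) * (snd q)\<^sup>2) * (a q + 1) - b q) / (snd q)\<^sup>2)"
    by (intro is_solution_ode3_sol_plane) auto
  then obtain f f1 f2 where f: "ode3_sol \<mu> (fst ` U) f f1 f2"
    and jets: "\<And>q. q \<in> U \<Longrightarrow> a q + 1 = f (fst q) \<and> (2 * a q + p q + 1) / snd q = f1 (fst q) \<and>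
       2 * (2 * a q + p q + 1 - (1 + \<mu> (fst q) * (snd q)\<^sup>2) * (a q + 1) - b q) / (snd q)\<^sup>2 = f2 (fst q)"
    using ode3_sol_plane_factor[OF _ U(1,2) \<mu>] by blast
  have "a (x, z) = -1 + f x \<and>
          b (x, z) = - (1 + \<mu> x * z^2) * f x + z * f1 x - 1/2 * z^2 * f2 x \<and>
          p (x, z) = 1 - 2 * f x + z * f1 x" if "(x, z) \<in> U" for x z
  proof -
    have "z > 0"
      using U(3) that by auto
    moreover have "f x = a (x, z) + 1" "f1 x = (2 * a (x, z) + p (x, z) + 1) / z"
      "f2 x = 2 * (2 * a (x, z) + p (x, z) + 1 - (1 + \<mu> x * z\<^sup>2) * (a (x, z) + 1) - b (x, z)) / z\<^sup>2"
      using jets[OF that, unfolded fst_conv snd_conv] by (blast dest: sym)+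
    ultimately show ?thesis
      by (simp add: field_simps)
  qed
  with f show ?factorized
    by blast
next
  assume ?factorized
  with U(1,3) \<mu> show "is_solution \<mu> U a b p"
    by (auto intro: ode3_sol_is_solution)
qed

theorem mainTheorem6:
  fixes \<mu> :: "real \<Rightarrow> real" and U :: "(real \<times> real) set"
  assumes "open U" and "connected U" and "U \<subseteq> {(x, z). z > 0}"
    and "is_interval (fst ` U)"
    and "smooth_on (fst ` U) \<mu>"
  shows
    "(\<forall>a b p. is_solution \<mu> U a b p \<longleftrightarrow>
       (\<exists>f f1 f2 f3.
          (\<forall>x\<in>fst ` U. (f has_real_derivative f1 x) (at x) \<and>
                        (f1 has_real_derivative f2 x) (at x) \<and>
                        (f2 has_real_derivative f3 x) (at x) \<and>
                        f3 x + 4 * \<mu> x * f1 x + 2 * deriv \<mu> x * f x = 0) \<and>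
          (\<forall>x z. (x, z) \<in> U \<longrightarrow>
             a (x, z) = -1 + f x \<and>
             b (x, z) = - (1 + \<mu> x * z^2) * f x + z * f1 x - 1/2 * z^2 * f2 x \<and>
             p (x, z) = 1 - 2 * f x + z * f1 x)))
     \<and>
     (\<forall>\<phi>0 \<phi>1 d0 d1 dd0 dd1.
        (\<forall>x\<in>fst ` U. (\<phi>0 has_real_derivative d0 x) (at x) \<and>
                      (d0 has_real_derivative dd0 x) (at x) \<and>
                      (\<phi>1 has_real_derivative d1 x) (at x) \<and>
                      (d1 has_real_derivative dd1 x) (at x) \<and>
                      dd0 x + \<mu> x * \<phi>0 x = 0 \<and> dd1 x + \<mu> x * \<phi>1 x = 0 \<and>
                      \<phi>0 x * d1 x - \<phi>1 x * d0 x = 1)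
        \<longrightarrow> (\<forall>f. (\<exists>f1 f2 f3.
                    (\<forall>x\<in>fst ` U. (f has_real_derivative f1 x) (at x) \<and>
                        (f1 has_real_derivative f2 x) (at x) \<and>
                        (f2 has_real_derivative f3 x) (at x) \<and>
                        f3 x + 4 * \<mu> x * f1 x + 2 * deriv \<mu> x * f x = 0))
                 \<longleftrightarrow> (\<exists>c0 c1 c2. \<forall>x\<in>fst ` U.
                        f x = - c0 * (\<phi>0 x)^2 - 2 * c1 * \<phi>0 x * \<phi>1 x - c2 * (\<phi>1 x)^2)))"
proof -
  have \<mu>: "\<forall>x\<in>fst ` U. \<mu> differentiable (at x) \<and> deriv \<mu> differentiable (at x)"
    using smooth_on_differentiable[OF assms(5)] by blast
  then have \<mu>1: "\<forall>x\<in>fst ` U. \<mu> differentiable (at x)"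
    by blast
  have "open (fst ` U)"
    using assms(1) by (rule open_image_fst)
  show ?thesis
    unfolding ex_simps(1) ode3_sol_iff_ex
    by (intro conjI allI impI is_solution_iff_ode3_sol[OF assms(1-3) \<mu>])
      (rule ode3_sol_iff_quadratic[OF \<open>open (fst ` U)\<close> assms(4) \<mu>1 ode2_sol_pairI]; assumption)
qed

end
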